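(* Let $\mathbf A$ be a finite subdirectly irreducible cBCK-algebra. Then, up to isomorphism, $$\mathcal S(\mathbf A)=\mathcal S_d(\mathbf A)\cup \mathcal S_\delta(\mathcal S_d(\mathbf A)).$$ Moreover, if every algebra in $\mathcal S_\delta(\mathcal S_d(\mathbf A))$ is a chain, then $\mathcal S(\mathbf A)=\mathcal S_d(\mathbf A)$.
   Context: A BCK-algebra is an algebra $(A,\ominus,0)$ of type $(2,0)$ satisfying $((x\ominus y)\ominus(x\ominus z))\ominus(z\ominus y)=0$, $x\ominus 0=x$, $0\ominus x=0$, and ($x\ominus y=0$ and $y\ominus x=0$ imply $x=y$); it is ordered by $x\le y$ iff $x\ominus y=0$. A cBCK-algebra is a BCK-algebra satisfying $x\ominus(x\ominus y)=y\ominus(y\ominus x)$; its order is a meet-semilattice with $x\wedge y=x\ominus(x\ominus y)$. Finite subdirectly irreducible cBCK-algebras are, as posets, rooted trees with root $0$. For an element $a$, $\mathrm{h}(a)=|[0,a]|-1$ is its height, and the height of an algebra is the maximum height of its elements; $\mathrm{m}(\cdot)$ denotes the set of maximal elements. $\mathcal S(\mathbf A)$ is the set of subalgebras of $\mathbf A$; $\mathcal S_d(\mathbf A)$ is the set of subalgebras of $\mathbf A$ whose universe is a downset of $\mathbf A$. For a finite cBCK-algebra $\mathbf C$ whose order is a rooted tree, of height $n$, and for $k$ a divisor of $n$ with $k\ne 1,n$, put $C_k=\{x\in C\mid k\text{ divides }\mathrm{h}(x)\}$; $\mathcal S_\delta(\mathbf C)$ denotes the set of subalgebras of $\mathbf C$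 whose universe is of the form $C_k\cup\mathrm{m}(\mathbf C)$ for such a $k$. For a set $\mathcal X$ of such algebras, $\mathcal S_\delta(\mathcal X)=\bigcup_{\mathbf C\in\mathcal X}\mathcal S_\delta(\mathbf C)$. *)

theory Defs
  imports Main
begin

text \<open>An algebra of type (2,0) is given by a carrier set A, a binary operation f
  (the BCK subtraction) and a constant z (the element 0).\<close>

definition bck :: "'a set \<Rightarrow> ('a \<Rightarrow> 'a \<Rightarrow> 'a) \<Rightarrow> 'a \<Rightarrow> bool" where
  "bck A f z \<longleftrightarrow> z \<in> A \<and> (\<forall>x\<in>A. \<forall>y\<in>A. f x y \<in> A)
     \<and> (\<forall>x\<in>A. \<forall>y\<in>A. \<forall>w\<in>A. f (f (f x y) (f x w)) (f w y) = z)
     \<and> (\<forall>x\<in>A. f x z = x)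
     \<and> (\<forall>x\<in>A. f z x = z)
     \<and> (\<forall>x\<in>A. \<forall>y\<in>A. f x y = z \<and> f y x = z \<longrightarrow> x = y)"

definition cbck :: "'a set \<Rightarrow> ('a \<Rightarrow> 'a \<Rightarrow> 'a) \<Rightarrow> 'a \<Rightarrow> bool" where
  "cbck A f z \<longleftrightarrow> bck A f z \<and> (\<forall>x\<in>A. \<forall>y\<in>A. f x (f x y) = f y (f y x))"

definition bleq :: "('a \<Rightarrow> 'a \<Rightarrow> 'a) \<Rightarrow> 'a \<Rightarrow> 'a \<Rightarrow> 'a \<Rightarrow> bool" where
  "bleq f z x y \<longleftrightarrow> f x y = z"

text \<open>Congruences of the algebra (compatibility with the constant is automatic).\<close>
definition congruence :: "'a set \<Rightarrow> ('a \<Rightarrow> 'a \<Rightarrow> 'a) \<Rightarrow> 'a rel \<Rightarrow> bool" where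
  "congruence A f \<theta> \<longleftrightarrow> equiv A \<theta>
     \<and> (\<forall>a b c d. (a, b) \<in> \<theta> \<and> (c, d) \<in> \<theta> \<longrightarrow> (f a c, f b d) \<in> \<theta>)"

text \<open>Subdirectly irreducible: nontrivial, and the non-identity congruences have a
  common non-diagonal pair (i.e. there is a monolith).\<close>
definition subdir_irred :: "'a set \<Rightarrow> ('a \<Rightarrow> 'a \<Rightarrow> 'a) \<Rightarrow> bool" where
  "subdir_irred A f \<longleftrightarrow> (\<exists>a\<in>A. \<exists>b\<in>A. a \<noteq> b \<and>
     (\<forall>\<theta>. congruence A f \<theta> \<and> \<theta> \<noteq> Id_on A \<longrightarrow> (a, b) \<in> \<theta>))"

definition subalg :: "'a set \<Rightarrow> ('a \<Rightarrow> 'a \<Rightarrow> 'a) \<Rightarrow> 'a \<Rightarrow> 'a set \<Rightarrow> bool" where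
  "subalg A f z B \<longleftrightarrow> B \<subseteq> A \<and> z \<in> B \<and> (\<forall>x\<in>B. \<forall>y\<in>B. f x y \<in> B)"

definition is_downset :: "'a set \<Rightarrow> ('a \<Rightarrow> 'a \<Rightarrow> 'a) \<Rightarrow> 'a \<Rightarrow> 'a set \<Rightarrow> bool" where
  "is_downset A f z B \<longleftrightarrow> (\<forall>x\<in>B. \<forall>y\<in>A. bleq f z y x \<longrightarrow> y \<in> B)"

definition Subs :: "'a set \<Rightarrow> ('a \<Rightarrow> 'a \<Rightarrow> 'a) \<Rightarrow> 'a \<Rightarrow> 'a set set" where
  "Subs A f z = {B. subalg A f z B}"

definition Subs_d :: "'a set \<Rightarrow> ('a \<Rightarrow> 'a \<Rightarrow> 'a) \<Rightarrow> 'a \<Rightarrow> 'a set set" where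
  "Subs_d A f z = {B. subalg A f z B \<and> is_downset A f z B}"

definition elt_height :: "'a set \<Rightarrow> ('a \<Rightarrow> 'a \<Rightarrow> 'a) \<Rightarrow> 'a \<Rightarrow> 'a \<Rightarrow> nat" where
  "elt_height C f z a = card {x \<in> C. bleq f z z x \<and> bleq f z x a} - 1"

definition alg_height :: "'a set \<Rightarrow> ('a \<Rightarrow> 'a \<Rightarrow> 'a) \<Rightarrow> 'a \<Rightarrow> nat" where
  "alg_height C f z = Max (elt_height C f z ` C)"

definition maximals :: "'a set \<Rightarrow> ('a \<Rightarrow> 'a \<Rightarrow> 'a) \<Rightarrow> 'a \<Rightarrow> 'a set" where
  "maximals C f z = {x \<in> C. \<forall>y\<in>C. bleq f z x y \<longrightarrow> y = x}"

definition is_chain :: "'a set \<Rightarrow> ('a \<Rightarrow> 'a \<Rightarrow> 'a) \<Rightarrow> 'a \<Rightarrow> bool" where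
  "is_chain C f z \<longleftrightarrow> (\<forall>x\<in>C. \<forall>y\<in>C. bleq f z x y \<or> bleq f z y x)"

definition rooted_tree :: "'a set \<Rightarrow> ('a \<Rightarrow> 'a \<Rightarrow> 'a) \<Rightarrow> 'a \<Rightarrow> bool" where
  "rooted_tree C f z \<longleftrightarrow> finite C \<and> z \<in> C \<and> (\<forall>x\<in>C. bleq f z z x)
     \<and> (\<forall>a\<in>C. is_chain {x \<in> C. bleq f z x a} f z)"

definition C_k :: "'a set \<Rightarrow> ('a \<Rightarrow> 'a \<Rightarrow> 'a) \<Rightarrow> 'a \<Rightarrow> nat \<Rightarrow> 'a set" where
  "C_k C f z k = {x \<in> C. k dvd elt_height C f z x}"

definition Subs_delta :: "'a set \<Rightarrow> ('a \<Rightarrow> 'a \<Rightarrow> 'a) \<Rightarrow> 'a \<Rightarrow> 'a set set" where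
  "Subs_delta C f z = {D. rooted_tree C f z \<and> subalg C f z D \<and>
     (\<exists>k. 0 < k \<and> k dvd alg_height C f z \<and> k \<noteq> 1 \<and> k \<noteq> alg_height C f z
          \<and> D = C_k C f z k \<union> maximals C f z)}"

definition Subs_delta_set :: "'a set set \<Rightarrow> ('a \<Rightarrow> 'a \<Rightarrow> 'a) \<Rightarrow> 'a \<Rightarrow> 'a set set" where
  "Subs_delta_set X f z = (\<Union>C\<in>X. Subs_delta C f z)"

definition alg_iso :: "('a \<Rightarrow> 'a \<Rightarrow> 'a) \<Rightarrow> 'a \<Rightarrow> 'a set \<Rightarrow> 'a set \<Rightarrow> bool" where
  "alg_iso f z B D \<longleftrightarrow> (\<exists>\<phi>. bij_betw \<phi> B D \<and> \<phi> z = z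
     \<and> (\<forall>x\<in>B. \<forall>y\<in>B. \<phi> (f x y) = f (\<phi> x) (\<phi> y)))"

definition eq_upto_iso :: "('a \<Rightarrow> 'a \<Rightarrow> 'a) \<Rightarrow> 'a \<Rightarrow> 'a set set \<Rightarrow> 'a set set \<Rightarrow> bool" where
  "eq_upto_iso f z X Y \<longleftrightarrow> (\<forall>B\<in>X. \<exists>D\<in>Y. alg_iso f z B D) \<and> (\<forall>D\<in>Y. \<exists>B\<in>X. alg_iso f z D B)"

end

theory Submission
  imports Defs
begin

(* In a finite subdirectly irreducible cBCK-algebra the meet of two nonzero elements is nonzero,
   and this forces every principal downset [0,a] to be a chain: the order is a rooted tree in
   which x - y has height h(x) - h(y) whenever y <= x.
   Let B be a subalgebra with a nonzero element and let m be a nonzero element of B of least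
   height g. Meeting with m shows that m lies below every nonzero element of B, and subtracting m
   lowers heights by exactly g. Hence all heights in B are multiples of g and, descending from
   p in B in steps of m, every element below p whose height is a multiple of g lies in B. So B
   is C_g together with the maximal elements of the downset C generated by B: B = C if g = 1,
   B = {0, m} if g is the height of C, and B is in S_delta(C) otherwise. Finally, finite
   cBCK-chains of equal size are isomorphic (heights are additive), so a chain subalgebra is
   isomorphic to a principal downset. *)

locale cbck_algebra =
  fixes A :: "'a set" and f :: "'a \<Rightarrow> 'a \<Rightarrow> 'a" (infixl \<open>\<ominus>\<close> 65) and z :: 'a
  assumes zero_closed: "z \<in> A"
    and sub_closed: "x \<in> A \<Longrightarrow> y \<in> A \<Longrightarrow> x \<ominus> y \<in> A"
    and bck_axiom: "x \<in> A \<Longrightarrow> y \<in> A \<Longrightarrow> w \<in> A \<Longrightarrow> ((x \<ominus> y) \<ominus> (x \<ominus> w)) \<ominus> (w \<ominus> y) = z"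
    and sub_zero: "x \<in> A \<Longrightarrow> x \<ominus> z = x"
    and zero_sub: "x \<in> A \<Longrightarrow> z \<ominus> x = z"
    and below_antisym: "x \<in> A \<Longrightarrow> y \<in> A \<Longrightarrow> x \<ominus> y = z \<Longrightarrow> y \<ominus> x = z \<Longrightarrow> x = y"
    and commutative: "x \<in> A \<Longrightarrow> y \<in> A \<Longrightarrow> x \<ominus> (x \<ominus> y) = y \<ominus> (y \<ominus> x)"
begin

abbreviation below :: "'a \<Rightarrow> 'a \<Rightarrow> bool" (infix \<open>\<preceq>\<close> 50)
  where "x \<preceq> y \<equiv> x \<ominus> y = z"

lemma sub_self: "x \<in> A \<Longrightarrow> x \<ominus> x = z"
  using bck_axiom[of x z z] by (simp add: sub_zero zero_sub zero_closed sub_closed)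

lemma sub_below: "x \<in> A \<Longrightarrow> y \<in> A \<Longrightarrow> x \<ominus> y \<preceq> x"
  using bck_axiom[of x y z] by (simp add: sub_zero zero_sub zero_closed sub_closed)

lemma meet_below_right: "x \<in> A \<Longrightarrow> y \<in> A \<Longrightarrow> x \<ominus> (x \<ominus> y) \<preceq> y"
  using bck_axiom[of x z y] by (simp add: sub_zero zero_sub zero_closed sub_closed)

lemma meet_below_left: "x \<in> A \<Longrightarrow> y \<in> A \<Longrightarrow> x \<ominus> (x \<ominus> y) \<preceq> x"
  by (simp add: sub_closed sub_below)

lemma below_trans: "x \<in> A \<Longrightarrow> y \<in> A \<Longrightarrow> w \<in> A \<Longrightarrow> x \<preceq> y \<Longrightarrow> y \<preceq> w \<Longrightarrow> x \<preceq> w"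
  using bck_axiom[of x w y] by (simp add: sub_zero sub_closed)

lemma sub_antimono: "x \<in> A \<Longrightarrow> y \<in> A \<Longrightarrow> w \<in> A \<Longrightarrow> y \<preceq> w \<Longrightarrow> x \<ominus> w \<preceq> x \<ominus> y"
  using bck_axiom[of x w y] by (simp add: sub_zero sub_closed)

lemma sub_exchange_below:
  assumes "x \<in> A" "y \<in> A" "w \<in> A"
  shows "(x \<ominus> y) \<ominus> w \<preceq> (x \<ominus> w) \<ominus> y"
proof (rule below_trans)
  show "(x \<ominus> y) \<ominus> w \<preceq> (x \<ominus> y) \<ominus> (x \<ominus> (x \<ominus> w))"
    using assms by (simp add: sub_antimono sub_closed meet_below_right)
  show "(x \<ominus> y) \<ominus> (x \<ominus> (x \<ominus> w)) \<preceq> (x \<ominus> w) \<ominus> y"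
    using assms by (simp add: bck_axiom sub_closed)
qed (use assms in \<open>simp_all add: sub_closed\<close>)

lemma sub_exchange: "x \<in> A \<Longrightarrow> y \<in> A \<Longrightarrow> w \<in> A \<Longrightarrow> (x \<ominus> y) \<ominus> w = (x \<ominus> w) \<ominus> y"
  by (rule below_antisym) (simp_all add: sub_closed sub_exchange_below)

lemma sub_sub_below: "x \<in> A \<Longrightarrow> y \<in> A \<Longrightarrow> w \<in> A \<Longrightarrow> (x \<ominus> y) \<ominus> (w \<ominus> y) \<preceq> x \<ominus> w"
  using bck_axiom[of x y w] sub_exchange[of "x \<ominus> y" "x \<ominus> w" "w \<ominus> y"] by (simp add: sub_closed)

lemma sub_mono: "x \<in> A \<Longrightarrow> y \<in> A \<Longrightarrow> w \<in> A \<Longrightarrow> x \<preceq> w \<Longrightarrow> x \<ominus> y \<preceq> w \<ominus> y"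
  using sub_sub_below[of x y w] by (simp add: sub_zero sub_closed)

lemma sub_sub_cancel: "x \<in> A \<Longrightarrow> y \<in> A \<Longrightarrow> y \<preceq> x \<Longrightarrow> x \<ominus> (x \<ominus> y) = y"
  using commutative[of x y] sub_zero[of y] by simp

lemma below_meet:
  assumes "x \<in> A" "y \<in> A" "w \<in> A" "w \<preceq> x" "w \<preceq> y"
  shows "w \<preceq> x \<ominus> (x \<ominus> y)"
proof -
  have "x \<ominus> y \<preceq> x \<ominus> w"
    using assms by (simp add: sub_antimono)
  then have "x \<ominus> (x \<ominus> w) \<preceq> x \<ominus> (x \<ominus> y)"
    using assms by (simp add: sub_antimono sub_closed)
  then show ?thesis
    using assms by (simp add: sub_sub_cancel)
qed

lemma below_meet_zero:
  "x \<in> A \<Longrightarrow> y \<in> A \<Longrightarrow> w \<in> A \<Longrightarrow> w \<preceq> x \<Longrightarrow> w \<preceq> y \<Longrightarrow> x \<ominus> (x \<ominus> y) = z \<Longrightarrow> w = z"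
  using below_meet[of x y w] sub_zero[of w] by simp

lemma sub_eq_self_if_meet_zero: "x \<in> A \<Longrightarrow> y \<in> A \<Longrightarrow> x \<ominus> (x \<ominus> y) = z \<Longrightarrow> x \<ominus> y = x"
  by (rule below_antisym) (simp_all add: sub_closed sub_below)

lemma cbck_algebra_subalg:
  assumes "subalg A (\<ominus>) z B" shows "cbck_algebra B (\<ominus>) z"
proof -
  have B_A: "\<And>x. x \<in> B \<Longrightarrow> x \<in> A" and B: "z \<in> B" "\<And>x y. x \<in> B \<Longrightarrow> y \<in> B \<Longrightarrow> x \<ominus> y \<in> B"
    using assms unfolding subalg_def by auto
  show ?thesis
  proof unfold_locales
    fix x y assume "x \<in> B" "y \<in> B" "x \<ominus> y = z" "y \<ominus> x = z"
    then show "x = y"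
      using below_antisym B_A by blast
  qed (auto simp: B_A B bck_axiom sub_zero zero_sub commutative)
qed

section \<open>Ideals and subdirect irreducibility\<close>

definition ideal :: "'a set \<Rightarrow> bool" where
  "ideal J \<longleftrightarrow> J \<subseteq> A \<and> z \<in> J \<and> (\<forall>x\<in>A. \<forall>y\<in>J. x \<ominus> y \<in> J \<longrightarrow> x \<in> J)"

definition ideal_congruence :: "'a set \<Rightarrow> 'a rel" where
  "ideal_congruence J = {(x, y). x \<in> A \<and> y \<in> A \<and> x \<ominus> y \<in> J \<and> y \<ominus> x \<in> J}"

definition annihilator :: "'a set \<Rightarrow> 'a set" where
  "annihilator S = {x \<in> A. \<forall>s\<in>S. x \<ominus> (x \<ominus> s) = z}"

lemma ideal_closed: "ideal J \<Longrightarrow> x \<in> A \<Longrightarrow> y \<in> J \<Longrightarrow> x \<ominus> y \<in> J \<Longrightarrow> x \<in> J"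
  unfolding ideal_def by blast

lemma ideal_below_closed: "ideal J \<Longrightarrow> y \<in> J \<Longrightarrow> x \<in> A \<Longrightarrow> x \<preceq> y \<Longrightarrow> x \<in> J"
  using ideal_closed[of J x y] unfolding ideal_def by simp

lemma ideal_sub_trans:
  assumes J: "ideal J" and A: "x \<in> A" "y \<in> A" "w \<in> A" and "x \<ominus> y \<in> J" "y \<ominus> w \<in> J"
  shows "x \<ominus> w \<in> J"
proof (rule ideal_closed[OF J _ \<open>x \<ominus> y \<in> J\<close>])
  show "(x \<ominus> w) \<ominus> (x \<ominus> y) \<in> J"
    using ideal_below_closed[OF J \<open>y \<ominus> w \<in> J\<close>] A by (simp add: bck_axiom sub_closed)
qed (use A in \<open>simp add: sub_closed\<close>)

lemma equiv_ideal_congruence: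
  assumes J: "ideal J" shows "equiv A (ideal_congruence J)"
proof (rule equivI)
  show "ideal_congruence J \<subseteq> A \<times> A"
    unfolding ideal_congruence_def by auto
  show "refl_on A (ideal_congruence J)"
    using J sub_self unfolding refl_on_def ideal_congruence_def ideal_def by auto
  show "sym (ideal_congruence J)"
    unfolding sym_def ideal_congruence_def by auto
  show "trans (ideal_congruence J)"
    using ideal_sub_trans[OF J] unfolding trans_def ideal_congruence_def by blast
qed

lemma congruence_ideal_congruence:
  assumes J: "ideal J" shows "congruence A (\<ominus>) (ideal_congruence J)"
proof -
  let ?\<theta> = "ideal_congruence J"
  have left: "(a \<ominus> c, b \<ominus> c) \<in> ?\<theta>" if ab: "(a, b) \<in> ?\<theta>" and c: "c \<in> A" for a b c
  proof -
    have A: "a \<in> A" "b \<in> A" and J_ab: "a \<ominus> b \<in> J" "b \<ominus> a \<in> J"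
      using ab unfolding ideal_congruence_def by auto
    have "(a \<ominus> c) \<ominus> (b \<ominus> c) \<in> J" "(b \<ominus> c) \<ominus> (a \<ominus> c) \<in> J"
      using ideal_below_closed[OF J J_ab(1)] ideal_below_closed[OF J J_ab(2)] A c
      by (simp_all add: sub_closed sub_sub_below)
    with A c show ?thesis
      unfolding ideal_congruence_def by (simp add: sub_closed)
  qed
  have right: "(b \<ominus> c, b \<ominus> d) \<in> ?\<theta>" if cd: "(c, d) \<in> ?\<theta>" and b: "b \<in> A" for b c d
  proof -
    have A: "c \<in> A" "d \<in> A" and J_cd: "c \<ominus> d \<in> J" "d \<ominus> c \<in> J"
      using cd unfolding ideal_congruence_def by auto
    have "(b \<ominus> c) \<ominus> (b \<ominus> d) \<in> J" "(b \<ominus> d) \<ominus> (b \<ominus> c) \<in> J"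
      using ideal_below_closed[OF J J_cd(2)] ideal_below_closed[OF J J_cd(1)] A b
      by (simp_all add: sub_closed bck_axiom)
    with A b show ?thesis
      unfolding ideal_congruence_def by (simp add: sub_closed)
  qed
  have "(a \<ominus> c, b \<ominus> d) \<in> ?\<theta>" if "(a, b) \<in> ?\<theta>" "(c, d) \<in> ?\<theta>" for a b c d
  proof -
    have "b \<in> A" "c \<in> A"
      using that unfolding ideal_congruence_def by auto
    then show ?thesis
      using left[OF that(1)] right[OF that(2)] equiv_ideal_congruence[OF J]
      unfolding equiv_def trans_def by blast
  qed
  then show ?thesis
    using equiv_ideal_congruence[OF J] unfolding congruence_def by blast
qed

lemma ideal_congruence_nontrivial:
  assumes "ideal J" "x \<in> J" "x \<noteq> z"
  shows "ideal_congruence J \<noteq> Id_on A"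
proof -
  have "x \<in> A" "z \<in> J"
    using assms unfolding ideal_def by auto
  then have "(x, z) \<in> ideal_congruence J"
    using assms zero_closed unfolding ideal_congruence_def by (simp add: sub_zero zero_sub)
  with assms(3) show ?thesis by auto
qed

lemma ideal_annihilator:
  assumes S: "S \<subseteq> A" shows "ideal (annihilator S)"
proof -
  have "x \<ominus> (x \<ominus> s) = z"
    if x: "x \<in> A" and y: "y \<in> annihilator S" and xy: "x \<ominus> y \<in> annihilator S" and s: "s \<in> S"
    for x y s
  proof -
    have yA: "y \<in> A" and sA: "s \<in> A"
      using y s S unfolding annihilator_def by auto
    define w where "w = x \<ominus> (x \<ominus> s)"
    have wA: "w \<in> A" and wx: "w \<preceq> x" and ws: "w \<preceq> s"
      unfolding w_def using x sA by (simp_all add: sub_closed meet_below_left meet_below_right)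
    have "w \<ominus> (w \<ominus> y) = z"
    proof (rule below_meet_zero)
      show "s \<ominus> (s \<ominus> y) = z"
        using y s commutative[OF sA yA] unfolding annihilator_def by auto
      show "w \<ominus> (w \<ominus> y) \<preceq> s"
        using below_trans[OF _ wA sA meet_below_left[OF wA yA] ws] wA yA by (simp add: sub_closed)
    qed (use wA yA sA in \<open>simp_all add: sub_closed meet_below_right\<close>)
    then have "w \<ominus> y = w"
      using wA yA by (rule sub_eq_self_if_meet_zero[rotated 2])
    with sub_mono[OF wA yA x wx] have "w \<preceq> x \<ominus> y"
      by simp
    moreover have "(x \<ominus> y) \<ominus> ((x \<ominus> y) \<ominus> s) = z"
      using xy s unfolding annihilator_def by auto
    ultimately have "w = z"
      using below_meet_zero[of "x \<ominus> y" s w] x yA sA wA ws by (simp add: sub_closed)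
    then show ?thesis
      unfolding w_def .
  qed
  then have "x \<in> annihilator S"
    if "x \<in> A" "y \<in> annihilator S" "x \<ominus> y \<in> annihilator S" for x y
    using that unfolding annihilator_def by blast
  moreover have "z \<in> annihilator S"
    using S zero_closed unfolding annihilator_def by (auto simp: zero_sub)
  ultimately show ?thesis
    unfolding ideal_def annihilator_def by blast
qed

lemma annihilator_inter_annihilator:
  assumes "x \<in> annihilator S" "x \<in> annihilator (annihilator S)" shows "x = z"
proof -
  have "x \<in> A" "x \<ominus> (x \<ominus> x) = z"
    using assms unfolding annihilator_def by auto
  then show ?thesis
    by (simp add: sub_self sub_zero)
qed

text \<open>If \<open>u, v \<noteq> z\<close> had meet \<open>z\<close>, the ideals \<open>ann {v} \<ni> u\<close> and \<open>ann (ann {v}) \<ni> v\<close>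
  would induce nontrivial congruences; as these ideals meet in \<open>{z}\<close>, the congruences
  meet in the identity, so no monolith could exist.\<close>
lemma subdir_irred_meet_eq_zero:
  assumes si: "subdir_irred A (\<ominus>)" and uv: "u \<in> A" "v \<in> A" "u \<ominus> (u \<ominus> v) = z"
  shows "u = z \<or> v = z"
proof (rule ccontr)
  assume nonzero: "\<not> (u = z \<or> v = z)"
  define J where "J = annihilator {v}"
  define K where "K = annihilator J"
  have J: "ideal J"
    unfolding J_def using uv(2) by (intro ideal_annihilator) auto
  have K: "ideal K"
    unfolding K_def by (intro ideal_annihilator) (auto simp: J_def annihilator_def)
  have "u \<in> J"
    unfolding J_def annihilator_def using uv by auto
  have "v \<in> K"
    unfolding K_def J_def annihilator_def using uv(2) commutative by auto
  obtain a b where ab: "a \<in> A" "b \<in> A" "a \<noteq> b"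
    and monolith: "\<And>\<theta>. congruence A (\<ominus>) \<theta> \<and> \<theta> \<noteq> Id_on A \<Longrightarrow> (a, b) \<in> \<theta>"
    using si unfolding subdir_irred_def by blast
  have "ideal_congruence J \<noteq> Id_on A" "ideal_congruence K \<noteq> Id_on A"
    using ideal_congruence_nontrivial J K \<open>u \<in> J\<close> \<open>v \<in> K\<close> nonzero by blast+
  then have "(a, b) \<in> ideal_congruence J" "(a, b) \<in> ideal_congruence K"
    using monolith congruence_ideal_congruence J K by blast+
  then have "a \<ominus> b = z" "b \<ominus> a = z"
    using annihilator_inter_annihilator[of _ "{v}"] unfolding ideal_congruence_def K_def J_def
    by auto
  with ab show False
    using below_antisym by blast
qed

end

lemma cbck_algebra_if_cbck:
  assumes "cbck A f z" shows "cbck_algebra A f z"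
  by (rule cbck_algebra.intro) (use assms in \<open>auto simp: cbck_def bck_def\<close>)

section \<open>Heights in finite cBCK-algebras\<close>

locale finite_cbck = cbck_algebra +
  assumes finite_carrier: "finite A"
begin

definition down :: "'a \<Rightarrow> 'a set" where
  "down a = {x \<in> A. x \<preceq> a}"

definition height :: "'a \<Rightarrow> nat" where
  "height a = card (down a) - 1"

lemma finite_down: "finite (down a)"
  unfolding down_def using finite_carrier by simp

lemma self_in_down: "a \<in> A \<Longrightarrow> a \<in> down a"
  unfolding down_def by (simp add: sub_self)

lemma down_mono: "x \<in> A \<Longrightarrow> y \<in> A \<Longrightarrow> x \<preceq> y \<Longrightarrow> down x \<subseteq> down y"
  unfolding down_def using below_trans by blast

lemma card_down: "a \<in> A \<Longrightarrow> card (down a) = height a + 1"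
  unfolding height_def using self_in_down[of a] finite_down[of a] card_gt_0_iff[of "down a"] by auto

lemma height_mono: "x \<in> A \<Longrightarrow> y \<in> A \<Longrightarrow> x \<preceq> y \<Longrightarrow> height x \<le> height y"
  unfolding height_def by (intro diff_le_mono card_mono finite_down down_mono)

lemma height_zero [simp]: "height z = 0"
proof -
  have "down z = {z}"
    unfolding down_def using zero_closed sub_zero sub_self by auto
  then show ?thesis
    unfolding height_def by simp
qed

lemma below_if_height_le:
  assumes A: "x \<in> A" "y \<in> A" and comparable: "x \<preceq> y \<or> y \<preceq> x" and le: "height x \<le> height y"
  shows "x \<preceq> y"
proof (cases "x \<preceq> y")
  case False
  with comparable have sub: "down y \<subseteq> down x"
    using A down_mono by blast
  have "card (down x) \<le> card (down y)"
    using A le card_down by simp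
  with card_mono[OF finite_down sub] have "card (down y) = card (down x)"
    by simp
  then have "down y = down x"
    by (rule card_subset_eq[OF finite_down sub])
  then show ?thesis
    using self_in_down[OF A(1)] unfolding down_def by auto
qed

lemma eq_if_height_eq:
  assumes "x \<in> A" "y \<in> A" "x \<preceq> y \<or> y \<preceq> x" "height x = height y"
  shows "x = y"
proof (rule below_antisym)
  show "x \<preceq> y" "y \<preceq> x"
    by (rule below_if_height_le; use assms in auto)+
qed (use assms in auto)

lemma height_less:
  assumes "x \<in> A" "y \<in> A" "x \<preceq> y" "x \<noteq> y"
  shows "height x < height y"
proof -
  have "height x \<noteq> height y"
    using eq_if_height_eq assms by blast
  with height_mono[OF assms(1-3)] show ?thesis
    by simp
qed

lemma height_eq_zero_iff: "a \<in> A \<Longrightarrow> height a = 0 \<longleftrightarrow> a = z"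
  using eq_if_height_eq[of z a] zero_closed zero_sub by auto

lemma card_down_sub:
  assumes A: "a \<in> A" "y \<in> A" and "y \<preceq> a"
  shows "card (down (a \<ominus> y)) = card {w \<in> down a. y \<preceq> w}"
proof -
  have inj: "inj_on ((\<ominus>) a) (down a)"
  proof (rule inj_onI)
    fix u v assume u: "u \<in> down a" and v: "v \<in> down a" and eq: "a \<ominus> u = a \<ominus> v"
    have "u = a \<ominus> (a \<ominus> u)"
      using u A(1) unfolding down_def by (simp add: sub_sub_cancel)
    also have "\<dots> = a \<ominus> (a \<ominus> v)"
      using eq by simp
    also have "\<dots> = v"
      using v A(1) unfolding down_def by (simp add: sub_sub_cancel)
    finally show "u = v" .
  qed
  have "(\<ominus>) a ` {w \<in> down a. y \<preceq> w} = down (a \<ominus> y)"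
  proof
    show "(\<ominus>) a ` {w \<in> down a. y \<preceq> w} \<subseteq> down (a \<ominus> y)"
      unfolding down_def using A by (auto simp: sub_closed sub_antimono)
    show "down (a \<ominus> y) \<subseteq> (\<ominus>) a ` {w \<in> down a. y \<preceq> w}"
    proof
      fix v assume "v \<in> down (a \<ominus> y)"
      then have v: "v \<in> A" "v \<preceq> a \<ominus> y"
        unfolding down_def by auto
      then have "v \<preceq> a"
        using below_trans[OF v(1) _ A(1) v(2)] A sub_below sub_closed by blast
      then have "v = a \<ominus> (a \<ominus> v)"
        using A v by (simp add: sub_sub_cancel)
      moreover have "y \<preceq> a \<ominus> v"
        using sub_antimono[OF A(1) v(1) _ v(2)] A \<open>y \<preceq> a\<close> by (simp add: sub_closed sub_sub_cancel)
      ultimately show "v \<in> (\<ominus>) a ` {w \<in> down a. y \<preceq> w}"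
        unfolding down_def using A v by (auto simp: sub_closed sub_below)
    qed
  qed
  moreover have "{w \<in> down a. y \<preceq> w} \<subseteq> down a"
    by blast
  ultimately show ?thesis
    using card_image[OF inj_on_subset[OF inj]] by metis
qed

lemma down_sub_closed: "a \<in> A \<Longrightarrow> x \<in> down a \<Longrightarrow> y \<in> A \<Longrightarrow> x \<ominus> y \<in> down a"
  unfolding down_def using below_trans[of "x \<ominus> y" x a] by (simp add: sub_closed sub_below)

lemma down_below_closed: "a \<in> A \<Longrightarrow> x \<in> down a \<Longrightarrow> y \<in> A \<Longrightarrow> y \<preceq> x \<Longrightarrow> y \<in> down a"
  unfolding down_def using below_trans[of y x a] by simp

lemma down_Subs_d: "a \<in> A \<Longrightarrow> down a \<in> Subs_d A (\<ominus>) z"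
  unfolding Subs_d_def subalg_def is_downset_def bleq_def
  using down_sub_closed down_below_closed zero_closed zero_sub by (auto simp: down_def)

lemma elt_height_eq_height:
  assumes D: "D \<in> Subs_d A (\<ominus>) z" and x: "x \<in> D"
  shows "elt_height D (\<ominus>) z x = height x"
proof -
  have "{w \<in> D. bleq (\<ominus>) z z w \<and> bleq (\<ominus>) z w x} = down x"
    using D x zero_sub unfolding Subs_d_def subalg_def is_downset_def bleq_def down_def by auto
  then show ?thesis
    unfolding elt_height_def height_def by simp
qed

lemma finite_cbck_subalg: "subalg A (\<ominus>) z B \<Longrightarrow> finite_cbck B (\<ominus>) z"
  by (intro finite_cbck.intro cbck_algebra_subalg finite_cbck_axioms.intro)
    (auto simp: subalg_def intro: finite_subset[OF _ finite_carrier])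

lemma bij_betw_height:
  assumes chain: "is_chain A (\<ominus>) z"
  shows "bij_betw height A {..<card A}"
proof -
  have inj: "inj_on height A"
  proof (rule inj_onI)
    fix x y assume "x \<in> A" "y \<in> A" "height x = height y"
    then show "x = y"
      using eq_if_height_eq chain unfolding is_chain_def bleq_def by blast
  qed
  have "height a < card A" if "a \<in> A" for a
    using card_down[OF that] card_mono[OF finite_carrier, of "down a"] unfolding down_def by auto
  then have "height ` A \<subseteq> {..<card A}"
    by auto
  moreover have "card (height ` A) = card {..<card A}"
    using card_image[OF inj] by simp
  ultimately have "height ` A = {..<card A}"
    by (simp add: card_subset_eq)
  with inj show ?thesis
    unfolding bij_betw_def by blast
qed

end

locale finite_tree_cbck = finite_cbck +
  assumes down_chain: "a \<in> A \<Longrightarrow> x \<in> A \<Longrightarrow> y \<in> A \<Longrightarrow> x \<preceq> a \<Longrightarrow> y \<preceq> a \<Longrightarrow> x \<preceq> y \<or> y \<preceq> x"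
begin

lemma height_sub:
  assumes A: "a \<in> A" "y \<in> A" and ya: "y \<preceq> a"
  shows "height (a \<ominus> y) + height y = height a"
proof -
  define U where "U = {w \<in> down a. y \<preceq> w}"
  have "down a = U \<union> (down y - {y})"
    unfolding U_def down_def using A ya down_chain[OF A(1) _ A(2) _ ya] sub_self below_trans by blast
  moreover have "U \<inter> (down y - {y}) = {}"
    unfolding U_def down_def using A below_antisym by blast
  moreover have "finite U"
    unfolding U_def using finite_down by simp
  ultimately have "card (down a) = card U + card (down y - {y})"
    using finite_down by (simp add: card_Un_disjoint)
  moreover have "card (down y - {y}) = height y"
    using card_down[OF A(2)] self_in_down[OF A(2)] finite_down by simp
  moreover have "card U = height (a \<ominus> y) + 1"
    using card_down_sub[OF A ya] card_down[of "a \<ominus> y"] A sub_closed unfolding U_def by simp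
  ultimately show ?thesis
    using card_down[OF A(1)] by simp
qed

lemma exists_below_with_height:
  assumes a: "a \<in> A" and j: "j \<le> height a"
  shows "\<exists>x\<in>A. x \<preceq> a \<and> height x = j"
proof -
  have inj: "inj_on height (down a)"
    using a down_chain eq_if_height_eq unfolding inj_on_def down_def by blast
  have "height ` down a \<subseteq> {..height a}"
    using a height_mono unfolding down_def by auto
  moreover have "card (height ` down a) = card {..height a}"
    using card_image[OF inj] card_down[OF a] by simp
  ultimately have "height ` down a = {..height a}"
    by (simp add: card_subset_eq)
  with j have "j \<in> height ` down a"
    by simp
  then show ?thesis
    unfolding down_def by auto
qed

lemma rooted_tree_Subs_d:
  assumes "D \<in> Subs_d A (\<ominus>) z" shows "rooted_tree D (\<ominus>) z"
proof -
  have D: "D \<subseteq> A" "z \<in> D"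
    using assms unfolding Subs_d_def subalg_def by auto
  have "is_chain {x \<in> D. bleq (\<ominus>) z x a} (\<ominus>) z" if "a \<in> D" for a
    using that D down_chain[of a] unfolding is_chain_def bleq_def by blast
  then show ?thesis
    using D finite_subset[OF D(1) finite_carrier] zero_sub unfolding rooted_tree_def bleq_def by auto
qed

end

section \<open>Finite cBCK-chains\<close>

lemma (in finite_cbck) finite_tree_cbck_if_chain: "is_chain A (\<ominus>) z \<Longrightarrow> finite_tree_cbck A (\<ominus>) z"
  unfolding is_chain_def bleq_def by unfold_locales blast

lemma alg_iso_if_height_preserving:
  assumes B: "finite_tree_cbck B f z" and D: "finite_tree_cbck D f z"
    and chains: "is_chain B f z" "is_chain D f z" and bij: "bij_betw \<phi> B D"
    and height_\<phi>: "\<And>x. x \<in> B \<Longrightarrow> finite_cbck.height D f z (\<phi> x) = finite_cbck.height B f z x"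
  shows "alg_iso f z B D"
proof -
  interpret B: finite_tree_cbck B f z
    by (fact B)
  interpret D: finite_tree_cbck D f z
    by (fact D)
  have B_comparable: "f x y = z \<or> f y x = z" if "x \<in> B" "y \<in> B" for x y
    using chains(1) that unfolding is_chain_def bleq_def by blast
  have D_comparable: "f x y = z \<or> f y x = z" if "x \<in> D" "y \<in> D" for x y
    using chains(2) that unfolding is_chain_def bleq_def by blast
  have \<phi>_in: "\<phi> x \<in> D" if "x \<in> B" for x
    using bij_betwE[OF bij] that by blast
  have \<phi>_mono: "f (\<phi> y) (\<phi> x) = z" if "x \<in> B" "y \<in> B" "f y x = z" for x y
  proof (rule D.below_if_height_le)
    show "D.height (\<phi> y) \<le> D.height (\<phi> x)"
      using height_\<phi> B.height_mono that by simp
  qed (use that \<phi>_in D_comparable in auto)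
  have \<phi>_zero: "\<phi> z = z"
  proof -
    have "D.height (\<phi> z) = 0"
      using height_\<phi> B.zero_closed by simp
    then show ?thesis
      using D.height_eq_zero_iff \<phi>_in B.zero_closed by blast
  qed
  have "\<phi> (f x y) = f (\<phi> x) (\<phi> y)" if xy: "x \<in> B" "y \<in> B" for x y
  proof (cases "f y x = z")
    case True
    have B_sub: "B.height (f x y) + B.height y = B.height x"
      using xy True by (rule B.height_sub)
    have D_sub: "D.height (f (\<phi> x) (\<phi> y)) + D.height (\<phi> y) = D.height (\<phi> x)"
      using \<phi>_in[OF xy(1)] \<phi>_in[OF xy(2)] \<phi>_mono[OF xy True] by (rule D.height_sub)
    have "D.height (\<phi> (f x y)) = B.height x - B.height y"
      using height_\<phi>[of "f x y"] B_sub xy B.sub_closed by simp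
    also have "\<dots> = D.height (\<phi> x) - D.height (\<phi> y)"
      using height_\<phi> xy by simp
    also have "\<dots> = D.height (f (\<phi> x) (\<phi> y))"
      using D_sub by arith
    finally have "D.height (\<phi> (f x y)) = D.height (f (\<phi> x) (\<phi> y))" .
    moreover have "\<phi> (f x y) \<in> D" "f (\<phi> x) (\<phi> y) \<in> D"
      using \<phi>_in xy B.sub_closed D.sub_closed by auto
    ultimately show ?thesis
      using D_comparable by (intro D.eq_if_height_eq[rotated 3]) auto
  next
    case False
    then have "f x y = z"
      using B_comparable xy by blast
    then show ?thesis
      using \<phi>_mono \<phi>_zero xy by simp
  qed
  with bij \<phi>_zero show ?thesis
    unfolding alg_iso_def by blast
qed

lemma alg_iso_finite_chains:
  assumes B: "finite_tree_cbck B f z" and D: "finite_tree_cbck D f z"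
    and chains: "is_chain B f z" "is_chain D f z" and card: "card B = card D"
  shows "alg_iso f z B D"
proof -
  interpret B: finite_tree_cbck B f z
    by (fact B)
  interpret D: finite_tree_cbck D f z
    by (fact D)
  define \<phi> where "\<phi> = the_inv_into D D.height \<circ> B.height"
  have bij_B: "bij_betw B.height B {..<card B}"
    using B.bij_betw_height[OF chains(1)] .
  have bij_D: "bij_betw D.height D {..<card B}"
    using D.bij_betw_height[OF chains(2)] card by simp
  have "bij_betw \<phi> B D"
    unfolding \<phi>_def using bij_B bij_betw_the_inv_into[OF bij_D] by (rule bij_betw_trans)
  moreover have "D.height (\<phi> x) = B.height x" if "x \<in> B" for x
  proof -
    have "B.height x \<in> {..<card B}"
      using bij_betwE[OF bij_B] that by blast
    then show ?thesis
      using f_the_inv_into_f_bij_betw[OF bij_D] unfolding \<phi>_def by simp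
  qed
  ultimately show ?thesis
    using alg_iso_if_height_preserving[OF B D chains] by blast
qed

context finite_tree_cbck
begin

lemma is_chain_down: "q \<in> A \<Longrightarrow> is_chain (down q) (\<ominus>) z"
  using down_chain[of q] unfolding is_chain_def bleq_def down_def by blast

lemma chain_has_greatest:
  assumes "S \<subseteq> A" "S \<noteq> {}" and chain: "is_chain S (\<ominus>) z"
  obtains p where "p \<in> S" "S \<subseteq> down p"
proof -
  have fin: "finite S"
    using assms finite_subset finite_carrier by auto
  have "Max (height ` S) \<in> height ` S"
    using fin assms by (intro Max_in) auto
  then obtain p where p: "p \<in> S" "height p = Max (height ` S)"
    by auto
  have "b \<preceq> p" if "b \<in> S" for b
  proof (rule below_if_height_le)
    show "height b \<le> height p"
      using p fin that by simp
  qed (use that p assms chain in \<open>auto simp: is_chain_def bleq_def\<close>)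
  with p assms show ?thesis
    using that unfolding down_def by blast
qed

lemma chain_subalgebra_iso_down:
  assumes B: "B \<in> Subs A (\<ominus>) z" and chain: "is_chain B (\<ominus>) z"
  shows "\<exists>D\<in>Subs_d A (\<ominus>) z. alg_iso (\<ominus>) z B D"
proof -
  have sub: "subalg A (\<ominus>) z B"
    using B unfolding Subs_def by simp
  then have BA: "B \<subseteq> A" and "B \<noteq> {}"
    unfolding subalg_def by auto
  then obtain p where p: "p \<in> B" "B \<subseteq> down p"
    using chain by (rule chain_has_greatest)
  have "card B \<le> card (down p)"
    using p(2) by (rule card_mono[OF finite_down])
  moreover have "p \<in> A"
    using p BA by blast
  ultimately have "card B - 1 \<le> height p"
    using card_down by simp
  then obtain q where q: "q \<in> A" "height q = card B - 1"
    using exists_below_with_height \<open>p \<in> A\<close> by blast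
  have "card B \<noteq> 0"
    using \<open>B \<noteq> {}\<close> finite_subset[OF BA finite_carrier] by simp
  with q have card: "card B = card (down q)"
    using card_down by simp
  have down_q: "down q \<in> Subs_d A (\<ominus>) z"
    using q(1) by (rule down_Subs_d)
  then have "subalg A (\<ominus>) z (down q)"
    unfolding Subs_d_def by blast
  then have "alg_iso (\<ominus>) z B (down q)"
    using alg_iso_finite_chains finite_cbck.finite_tree_cbck_if_chain finite_cbck_subalg
      sub chain is_chain_down[OF q(1)] card by metis
  with down_q show ?thesis
    by blast
qed

end

section \<open>Subalgebras of finite subdirectly irreducible cBCK-algebras\<close>

locale finite_si_cbck = finite_cbck +
  assumes meet_nonzero: "u \<in> A \<Longrightarrow> v \<in> A \<Longrightarrow> u \<ominus> (u \<ominus> v) = z \<Longrightarrow> u = z \<or> v = z"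
begin

text \<open>For \<open>x, y \<preceq> a\<close> the meet \<open>w\<close> of \<open>a \<ominus> x\<close> and \<open>a \<ominus> y\<close> is nonzero unless \<open>x = a\<close> or
  \<open>y = a\<close>; then \<open>x, y \<preceq> a \<ominus> w \<prec> a\<close> and we descend.\<close>
lemma below_same_comparable:
  assumes "a \<in> A" "x \<in> A" "y \<in> A" "x \<preceq> a" "y \<preceq> a"
  shows "x \<preceq> y \<or> y \<preceq> x"
  using assms
proof (induction "height a" arbitrary: a rule: less_induct)
  case less
  define s where "s = a \<ominus> x"
  define t where "t = a \<ominus> y"
  define w where "w = s \<ominus> (s \<ominus> t)"
  have A: "s \<in> A" "t \<in> A" "w \<in> A"
    unfolding s_def t_def w_def using less.prems by (simp_all add: sub_closed)
  show ?case
  proof (cases "w = z")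
    case True
    then have "s = z \<or> t = z"
      using meet_nonzero A unfolding w_def by blast
    then have "x = a \<or> y = a"
      using less.prems sub_sub_cancel sub_zero unfolding s_def t_def by metis
    then show ?thesis
      using less.prems by auto
  next
    case False
    have ws: "w \<preceq> s" and wt: "w \<preceq> t"
      unfolding w_def using A by (simp_all add: meet_below_left meet_below_right)
    have wa: "w \<preceq> a"
      using below_trans[OF A(3) A(1) less.prems(1) ws] sub_below less.prems unfolding s_def by blast
    have "x \<preceq> a \<ominus> w"
      using sub_antimono[OF less.prems(1) A(3) A(1) ws] sub_sub_cancel less.prems unfolding s_def by simp
    moreover have "y \<preceq> a \<ominus> w"
      using sub_antimono[OF less.prems(1) A(3) A(2) wt] sub_sub_cancel less.prems unfolding t_def by simp
    moreover have "height (a \<ominus> w) < height a"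
    proof (rule height_less)
      show "a \<ominus> w \<noteq> a"
        using False sub_sub_cancel[OF less.prems(1) A(3) wa] sub_self less.prems(1) by auto
    qed (use less.prems A in \<open>simp_all add: sub_closed sub_below\<close>)
    ultimately show ?thesis
      using less.hyps less.prems A sub_closed by blast
  qed
qed

end

sublocale finite_si_cbck \<subseteq> finite_tree_cbck
  by unfold_locales (rule below_same_comparable)

locale nonzero_subalgebra = finite_si_cbck +
  fixes B :: "'a set"
  assumes subalg: "subalg A (\<ominus>) z B" and nonzero: "B \<noteq> {z}"
begin

lemma B_subset: "B \<subseteq> A" and zero_in_B: "z \<in> B" and sub_closed_B: "x \<in> B \<Longrightarrow> y \<in> B \<Longrightarrow> x \<ominus> y \<in> B"
  using subalg unfolding subalg_def by auto

definition least_nonzero :: 'a where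
  "least_nonzero = (ARG_MIN height b. b \<in> B \<and> b \<noteq> z)"

definition period :: nat where
  "period = height least_nonzero"

lemma least_nonzero: "least_nonzero \<in> B" "least_nonzero \<noteq> z"
  and least_nonzero_height_le: "b \<in> B \<Longrightarrow> b \<noteq> z \<Longrightarrow> period \<le> height b"
proof -
  obtain b where "b \<in> B" "b \<noteq> z"
    using nonzero zero_in_B by blast
  then show "least_nonzero \<in> B" "least_nonzero \<noteq> z" "b \<in> B \<Longrightarrow> b \<noteq> z \<Longrightarrow> period \<le> height b" for b
    unfolding period_def least_nonzero_def by (metis (mono_tags, lifting) arg_min_nat_lemma)+
qed

lemma least_nonzero_in_A: "least_nonzero \<in> A"
  using least_nonzero B_subset by blast

lemma least_nonzero_below:
  assumes b: "b \<in> B" "b \<noteq> z" shows "least_nonzero \<preceq> b"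
proof -
  let ?m = least_nonzero
  define w where "w = ?m \<ominus> (?m \<ominus> b)"
  have bA: "b \<in> A"
    using b B_subset by blast
  have "w \<in> B"
    unfolding w_def using b least_nonzero by (simp add: sub_closed_B)
  moreover have "w \<noteq> z"
    unfolding w_def using meet_nonzero[OF least_nonzero_in_A bA] least_nonzero b by blast
  ultimately have "height ?m \<le> height w"
    using least_nonzero_height_le unfolding period_def by blast
  moreover have "w \<preceq> ?m"
    unfolding w_def using least_nonzero_in_A bA by (rule meet_below_left)
  ultimately have "w = ?m"
    using height_mono[of w ?m] eq_if_height_eq[of w ?m] least_nonzero_in_A \<open>w \<in> B\<close> B_subset
    by fastforce
  then show ?thesis
    using meet_below_right[OF least_nonzero_in_A bA] unfolding w_def by simp
qed

lemma period_pos: "0 < period"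
  using height_eq_zero_iff least_nonzero least_nonzero_in_A unfolding period_def by blast

lemma sub_least_nonzero:
  assumes "b \<in> B" "b \<noteq> z"
  shows "b \<ominus> least_nonzero \<in> B" "b \<ominus> least_nonzero \<preceq> b"
    and "height (b \<ominus> least_nonzero) + period = height b"
  using assms least_nonzero sub_closed_B sub_below least_nonzero_in_A B_subset
    height_sub[OF _ least_nonzero_in_A least_nonzero_below] unfolding period_def by auto

lemma period_dvd_height: "b \<in> B \<Longrightarrow> period dvd height b"
proof (induction "height b" arbitrary: b rule: less_induct)
  case less
  show ?case
  proof (cases "b = z")
    case False
    let ?b' = "b \<ominus> least_nonzero"
    have "?b' \<in> B" and height_b: "height ?b' + period = height b"
      using sub_least_nonzero less.prems False by blast+
    with period_pos have "period dvd height ?b'"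
      using less.hyps by simp
    with height_b show ?thesis
      by (metis dvd_add dvd_refl)
  qed simp
qed

lemma mem_B_if_below:
  assumes "p \<in> B" "x \<in> A" "x \<preceq> p" "period dvd height x"
  shows "x \<in> B"
  using assms
proof (induction "height p" arbitrary: p rule: less_induct)
  case less
  show ?case
  proof (cases "x = p")
    case False
    have pA: "p \<in> A"
      using less.prems B_subset by blast
    have less_p: "height x < height p"
      using height_less less.prems pA False by blast
    have "period dvd height p - height x"
      using period_dvd_height[OF less.prems(1)] less.prems(4) by (rule dvd_diff_nat)
    then have "period \<le> height p - height x"
      using less_p by (intro dvd_imp_le) simp_all
    have "p \<noteq> z"
      using False less.prems(2,3) sub_zero by auto
    let ?p' = "p \<ominus> least_nonzero"
    have p': "?p' \<in> B" "?p' \<preceq> p" "height ?p' + period = height p"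
      using sub_least_nonzero less.prems(1) \<open>p \<noteq> z\<close> by blast+
    have "x \<preceq> ?p'"
    proof (rule below_if_height_le)
      show "x \<preceq> ?p' \<or> ?p' \<preceq> x"
        using down_chain[OF pA less.prems(2) _ less.prems(3) p'(2)] p'(1) B_subset by blast
      show "height x \<le> height ?p'"
        using \<open>period \<le> height p - height x\<close> p'(3) less_p by arith
    qed (use less.prems p' B_subset in auto)
    moreover have "height ?p' < height p"
      using p'(3) period_pos by simp
    ultimately show ?thesis
      using less.hyps p' less.prems by blast
  qed (use less.prems in simp)
qed

definition down_closure :: "'a set" where
  "down_closure = (\<Union>p\<in>B. down p)"

lemma B_subset_down_closure: "B \<subseteq> down_closure"
  unfolding down_closure_def using B_subset self_in_down by blast

lemma down_closure_Subs_d: "down_closure \<in> Subs_d A (\<ominus>) z"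
proof -
  have "x \<ominus> y \<in> down_closure" if "x \<in> down_closure" "y \<in> A" for x y
    using that B_subset down_sub_closed unfolding down_closure_def by blast
  moreover have "y \<in> down_closure" if "x \<in> down_closure" "y \<in> A" "y \<preceq> x" for x y
    using that B_subset down_below_closed unfolding down_closure_def by blast
  moreover have "z \<in> down_closure" "down_closure \<subseteq> A"
    using zero_in_B B_subset_down_closure unfolding down_closure_def down_def by auto
  ultimately show ?thesis
    unfolding Subs_d_def subalg_def is_downset_def bleq_def by blast
qed

lemma maximals_down_closure: "maximals down_closure (\<ominus>) z \<subseteq> B"
proof
  fix x assume x: "x \<in> maximals down_closure (\<ominus>) z"
  then obtain p where "p \<in> B" "x \<preceq> p"
    unfolding maximals_def down_closure_def down_def by blast
  with x show "x \<in> B"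
    using B_subset_down_closure unfolding maximals_def bleq_def by auto
qed

lemma C_k_down_closure: "C_k down_closure (\<ominus>) z period = B"
proof -
  have "C_k down_closure (\<ominus>) z period = {x \<in> down_closure. period dvd height x}"
    unfolding C_k_def using elt_height_eq_height[OF down_closure_Subs_d] by auto
  also have "\<dots> = B"
    using mem_B_if_below B_subset_down_closure period_dvd_height unfolding down_closure_def down_def
    by blast
  finally show ?thesis .
qed

lemma alg_height_down_closure:
  obtains p where "p \<in> B" "alg_height down_closure (\<ominus>) z = height p"
    and "\<And>x. x \<in> down_closure \<Longrightarrow> height x \<le> height p"
proof -
  let ?C = down_closure
  have "?C \<subseteq> A"
    using down_closure_Subs_d unfolding Subs_d_def subalg_def by blast
  then have fin: "finite (height ` ?C)"
    using finite_subset[OF _ finite_carrier] by blast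
  have "alg_height ?C (\<ominus>) z = Max (height ` ?C)"
    unfolding alg_height_def using elt_height_eq_height[OF down_closure_Subs_d] by simp
  moreover have "Max (height ` ?C) \<in> height ` ?C"
    using fin zero_in_B B_subset_down_closure by (intro Max_in) auto
  ultimately obtain q where q: "q \<in> ?C" "alg_height ?C (\<ominus>) z = height q"
    by auto
  have max: "height x \<le> height q" if "x \<in> ?C" for x
    using Max_ge[OF fin imageI[OF that]] q(2) \<open>alg_height ?C (\<ominus>) z = Max (height ` ?C)\<close>
    by simp
  obtain p where p: "p \<in> B" "q \<preceq> p" "q \<in> A"
    using q(1) unfolding down_closure_def down_def by blast
  have "height q = height p"
    using height_mono[OF p(3) _ p(2)] max[of p] p(1) B_subset B_subset_down_closure by force
  then show ?thesis
    using that p(1) q max by simp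
qed

lemma down_closure_if_period_eq_1: "period = 1 \<Longrightarrow> B = down_closure"
  using C_k_down_closure unfolding C_k_def by simp

lemma is_chain_if_period_eq_alg_height:
  assumes "period = alg_height down_closure (\<ominus>) z"
  shows "is_chain B (\<ominus>) z"
proof -
  obtain p where "p \<in> B" "alg_height down_closure (\<ominus>) z = height p"
    and max: "\<And>x. x \<in> down_closure \<Longrightarrow> height x \<le> height p"
    using alg_height_down_closure by blast
  have "b = least_nonzero" if "b \<in> B" "b \<noteq> z" for b
  proof (rule eq_if_height_eq)
    show "height b = height least_nonzero"
      using least_nonzero_height_le[OF that] max[of b] that B_subset_down_closure assms
        \<open>alg_height down_closure (\<ominus>) z = height p\<close>
      unfolding period_def by force
  qed (use that B_subset least_nonzero_in_A least_nonzero_below in auto)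
  then have "B \<subseteq> {z, least_nonzero}"
    by blast
  then show ?thesis
    using least_nonzero_in_A zero_closed zero_sub sub_self unfolding is_chain_def bleq_def by blast
qed

lemma Subs_delta_down_closure:
  assumes "period \<noteq> 1" "period \<noteq> alg_height down_closure (\<ominus>) z"
  shows "B \<in> Subs_delta down_closure (\<ominus>) z"
  unfolding Subs_delta_def
proof (intro CollectI conjI exI)
  show "rooted_tree down_closure (\<ominus>) z"
    using down_closure_Subs_d by (rule rooted_tree_Subs_d)
  show "subalg down_closure (\<ominus>) z B"
    using subalg B_subset_down_closure unfolding subalg_def by blast
  show "period dvd alg_height down_closure (\<ominus>) z"
    using alg_height_down_closure period_dvd_height by metis
  show "B = C_k down_closure (\<ominus>) z period \<union> maximals down_closure (\<ominus>) z"
    using C_k_down_closure maximals_down_closure by blast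
qed (use period_pos assms in auto)

lemma subalgebra_cases:
  "B \<in> Subs_d A (\<ominus>) z \<or> B \<in> Subs_delta_set (Subs_d A (\<ominus>) z) (\<ominus>) z \<or> is_chain B (\<ominus>) z"
proof -
  consider "period = 1" | "period = alg_height down_closure (\<ominus>) z"
    | "period \<noteq> 1" "period \<noteq> alg_height down_closure (\<ominus>) z"
    by blast
  then show ?thesis
  proof cases
    case 1
    then show ?thesis
      using down_closure_if_period_eq_1 down_closure_Subs_d by simp
  next
    case 2
    then show ?thesis
      using is_chain_if_period_eq_alg_height by simp
  next
    case 3
    then show ?thesis
      using Subs_delta_down_closure down_closure_Subs_d unfolding Subs_delta_set_def by blast
  qed
qed

end

lemma (in finite_si_cbck) subalgebra_classification:
  assumes "B \<in> Subs A (\<ominus>) z"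
  shows "B \<in> Subs_d A (\<ominus>) z \<or> B \<in> Subs_delta_set (Subs_d A (\<ominus>) z) (\<ominus>) z \<or> is_chain B (\<ominus>) z"
proof (cases "B = {z}")
  case True
  then show ?thesis
    using zero_closed sub_self unfolding is_chain_def bleq_def by simp
next
  case False
  interpret nonzero_subalgebra A "(\<ominus>)" z B
    using assms False unfolding Subs_def by unfold_locales auto
  show ?thesis
    by (rule subalgebra_cases)
qed

lemma Subs_d_subset_Subs: "Subs_d A f z \<subseteq> Subs A f z"
  unfolding Subs_d_def Subs_def by auto

lemma Subs_delta_set_subset_Subs: "Subs_delta_set (Subs_d A f z) f z \<subseteq> Subs A f z"
  unfolding Subs_delta_set_def Subs_delta_def Subs_d_def Subs_def subalg_def by blast

lemma alg_iso_refl: "alg_iso f z B B"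
  unfolding alg_iso_def by (rule exI[of _ id]) simp

theorem mainTheorem4:
  fixes A :: "'a set" and f :: "'a \<Rightarrow> 'a \<Rightarrow> 'a" and z :: 'a
  assumes "cbck A f z" and "finite A" and "subdir_irred A f"
  shows "eq_upto_iso f z (Subs A f z)
           (Subs_d A f z \<union> Subs_delta_set (Subs_d A f z) f z)
       \<and> ((\<forall>D\<in>Subs_delta_set (Subs_d A f z) f z. is_chain D f z)
            \<longrightarrow> eq_upto_iso f z (Subs A f z) (Subs_d A f z))"
proof -
  interpret cbck_algebra A f z
    using assms(1) by (rule cbck_algebra_if_cbck)
  interpret finite_si_cbck A f z
    by unfold_locales (use assms(2) subdir_irred_meet_eq_zero[OF assms(3)] in auto)
  have classes: "Subs_d A f z \<union> Subs_delta_set (Subs_d A f z) f z \<subseteq> Subs A f z"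
    using Subs_d_subset_Subs[of A f z] Subs_delta_set_subset_Subs[of A f z] by (rule Un_least)
  have chain_iso: "\<exists>D\<in>Subs_d A f z. alg_iso f z B D" if "B \<in> Subs A f z" "is_chain B f z" for B
    using that by (rule chain_subalgebra_iso_down)
  have "\<exists>D\<in>Subs_d A f z \<union> Subs_delta_set (Subs_d A f z) f z. alg_iso f z B D"
    if "B \<in> Subs A f z" for B
    using subalgebra_classification[OF that] chain_iso[OF that] alg_iso_refl[of f z B] by blast
  moreover have "\<exists>D\<in>Subs_d A f z. alg_iso f z B D"
    if "\<forall>D\<in>Subs_delta_set (Subs_d A f z) f z. is_chain D f z" "B \<in> Subs A f z" for B
    using subalgebra_classification[OF that(2)] chain_iso[OF that(2)] alg_iso_refl[of f z B] that(1)
    by blast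
  moreover have "\<exists>B\<in>Subs A f z. alg_iso f z D B"
    if "D \<in> Subs_d A f z \<union> Subs_delta_set (Subs_d A f z) f z" for D
    using that classes alg_iso_refl[of f z D] by blast
  ultimately show ?thesis
    unfolding eq_upto_iso_def using classes by blast
qed

end
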